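(* Let $M$ be a smooth $n$-manifold with a torsion-free linear connection $\nabla$ and a symmetric $(0,2)$-tensor field $c$, and let $\overline{g}_{\nabla,c}$ be the modified Riemannian extension on $T^{\ast}M$. Let $\widetilde{\nabla}$ be the unique linear connection on $T^{\ast}M$ satisfying $\widetilde{\nabla}\,\overline{g}_{\nabla,c}=0$ whose torsion $\widetilde{T}$ is given in the adapted frame by $\widetilde{T}(E_i,E_j)=-p_sR_{ijr}^{\ \ \ s}E_{\overline{r}}$ and $\widetilde{T}(E_i,E_{\overline{j}})=\widetilde{T}(E_{\overline{i}},E_j)=\widetilde{T}(E_{\overline{i}},E_{\overline{j}})=0$. Then, with respect to the adapted frame, $$\widetilde{\nabla}_{E_{\overline{i}}}E_{\overline{j}}=0,\quad \widetilde{\nabla}_{E_{\overline{i}}}E_{j}=0,\quad \widetilde{\nabla}_{E_{i}}E_{\overline{j}}=-\Gamma^{j}_{ih}E_{\overline{h}},$$ $$\widetilde{\nabla}_{E_{i}}E_{j}=\Gamma^{h}_{ij}E_{h}+\tfrac12\left(\nabla_i c_{jh}+\nabla_j c_{ih}-\nabla_h c_{ij}\right)E_{\overline{h}}.$$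
   Context: Summation convention; indices $h,i,j,\dots$ range over $1,\dots,n$ and $\overline{i}=n+i$. $\Gamma^h_{ij}$ are the coefficients of $\nabla$ in local coordinates $(x^i)$ on $M$, i.e. $\nabla_{\partial_i}\partial_j=\Gamma^h_{ij}\partial_h$. The curvature is $R(X,Y)Z=\nabla_X\nabla_YZ-\nabla_Y\nabla_XZ-\nabla_{[X,Y]}Z$ with $R(\partial_i,\partial_j)\partial_k=R_{ijk}^{\ \ \ h}\partial_h$. $c_{ij}$ are the components of $c$ and $\nabla_ic_{jk}$ those of $\nabla c$. On $T^{\ast}M$ use induced coordinates $(x^i,p_i)$, where $p_i$ are the components of a covector with respect to $dx^i$; write $\partial_{\overline{i}}=\partial/\partial p_i$. The adapted frame is $E_j=\partial_j+p_a\Gamma^a_{hj}\partial_{\overline{h}}$, $E_{\overline{j}}=\partial_{\overline{j}}$. The modified Riemannian extension $\overline{g}_{\nabla,c}$ is the pseudo-Riemannian metric on $T^{\ast}M$ given by $\overline{g}_{\nabla,c}(E_i,E_j)=c_{ij}$, $\overline{g}_{\nabla,c}(E_i,E_{\overline{j}})=\overline{g}_{\nabla,c}(E_{\overline{j}},E_i)=\delta_i^j$, $\overline{g}_{\nabla,c}(E_{\overline{i}},E_{\overline{j}})=0$. (A metric linear connection with prescribed torsion is unique.) *)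

theory Defs
  imports "HOL-Analysis.Analysis"
begin

text \<open>A coordinate chart of M is an open set U of real^'n
  (n = CARD('n)).  T*M over U is {z :: real^('n+'n). base z \<in> U}, where
  z $ Inl i = x^i and z $ Inr i = p_i; so index Inl i is i and Inr i is the barred index.
  Vector fields are given by their components in the coordinate frame (d_A).\<close>

definition pd :: "'i::finite \<Rightarrow> (real^'i \<Rightarrow> real) \<Rightarrow> real^'i \<Rightarrow> real" where
  "pd A f z = deriv (\<lambda>t. f (z + t *\<^sub>R axis A 1)) 0"

fun iter_pd :: "'i::finite list \<Rightarrow> (real^'i \<Rightarrow> real) \<Rightarrow> real^'i \<Rightarrow> real" where
  "iter_pd [] f = f"
| "iter_pd (A # as) f = pd A (iter_pd as f)"

definition smooth_on :: "(real^'i::finite) set \<Rightarrow> (real^'i \<Rightarrow> real) \<Rightarrow> bool" where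
  "smooth_on S f \<longleftrightarrow> (\<forall>as. continuous_on S (iter_pd as f) \<and>
                          (\<forall>z\<in>S. iter_pd as f differentiable (at z)))"

definition base :: "real^('n::finite + 'n) \<Rightarrow> real^'n" where
  "base z = (\<chi> i. z $ Inl i)"

definition fib :: "real^('n::finite + 'n) \<Rightarrow> real^'n" where
  "fib z = (\<chi> i. z $ Inr i)"

definition cotangent_region :: "(real^'n::finite) set \<Rightarrow> (real^('n + 'n)) set" where
  "cotangent_region U = {z. base z \<in> U}"

subsection \<open>Base manifold quantities (Gam h i j = Gamma^h_ij, c i j = c_ij)\<close>

definition curv :: "('n::finite \<Rightarrow> 'n \<Rightarrow> 'n \<Rightarrow> real^'n \<Rightarrow> real)
     \<Rightarrow> 'n \<Rightarrow> 'n \<Rightarrow> 'n \<Rightarrow> 'n \<Rightarrow> real^'n \<Rightarrow> real" where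
  \<comment> \<open>curv Gam i j k h x = R_ijk^h with R(d_i,d_j)d_k = R_ijk^h d_h\<close>
  "curv Gam i j k h x = pd i (Gam h j k) x - pd j (Gam h i k) x
     + (\<Sum>a\<in>UNIV. Gam h i a x * Gam a j k x - Gam h j a x * Gam a i k x)"

definition covc :: "('n::finite \<Rightarrow> 'n \<Rightarrow> 'n \<Rightarrow> real^'n \<Rightarrow> real)
     \<Rightarrow> ('n \<Rightarrow> 'n \<Rightarrow> real^'n \<Rightarrow> real) \<Rightarrow> 'n \<Rightarrow> 'n \<Rightarrow> 'n \<Rightarrow> real^'n \<Rightarrow> real" where
  \<comment> \<open>covc Gam c i j k x = nabla_i c_jk\<close>
  "covc Gam c i j k x = pd i (c j k) x
     - (\<Sum>a\<in>UNIV. Gam a i j x * c a k x + Gam a i k x * c j a x)"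

definition Efr :: "('n::finite \<Rightarrow> 'n \<Rightarrow> 'n \<Rightarrow> real^'n \<Rightarrow> real) \<Rightarrow> 'n
     \<Rightarrow> real^('n + 'n) \<Rightarrow> real^('n + 'n)" where
  "Efr Gam j z = axis (Inl j) 1
     + (\<Sum>h\<in>UNIV. (\<Sum>a\<in>UNIV. fib z $ a * Gam a h j (base z)) *\<^sub>R axis (Inr h) 1)"

definition Ebar :: "'n::finite \<Rightarrow> real^('n + 'n) \<Rightarrow> real^('n + 'n)" where
  "Ebar j z = axis (Inr j) 1"

definition frame_coords :: "('n::finite \<Rightarrow> 'n \<Rightarrow> 'n \<Rightarrow> real^'n \<Rightarrow> real)
     \<Rightarrow> real^('n + 'n) \<Rightarrow> real^('n + 'n) \<Rightarrow> real^('n + 'n)" where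
  \<comment> \<open>components of a tangent vector u at z w.r.t. (E_j, E_jbar): u = U^j E_j + U^jbar E_jbar\<close>
  "frame_coords Gam z u = (\<chi> A. case A of Inl j \<Rightarrow> u $ Inl j
     | Inr h \<Rightarrow> u $ Inr h - (\<Sum>j\<in>UNIV. (\<Sum>a\<in>UNIV. fib z $ a * Gam a h j (base z)) * u $ Inl j))"

definition gext :: "('n::finite \<Rightarrow> 'n \<Rightarrow> 'n \<Rightarrow> real^'n \<Rightarrow> real)
     \<Rightarrow> ('n \<Rightarrow> 'n \<Rightarrow> real^'n \<Rightarrow> real)
     \<Rightarrow> real^('n + 'n) \<Rightarrow> real^('n + 'n) \<Rightarrow> real^('n + 'n) \<Rightarrow> real" where
  \<comment> \<open>modified Riemannian extension: g(E_i,E_j)=c_ij, g(E_i,E_jbar)=delta, g(E_ibar,E_jbar)=0\<close>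
  "gext Gam c z u v = (let U = frame_coords Gam z u; V = frame_coords Gam z v in
     (\<Sum>i\<in>UNIV. \<Sum>j\<in>UNIV. c i j (base z) * U $ Inl i * V $ Inl j)
     + (\<Sum>i\<in>UNIV. U $ Inl i * V $ Inr i + U $ Inr i * V $ Inl i))"

subsection \<open>Linear connections on T*U via coefficients: nabla_{d_A} d_B = Gt C A B d_C\<close>

definition vder :: "(real^'k::finite \<Rightarrow> real^'k) \<Rightarrow> (real^'k \<Rightarrow> real) \<Rightarrow> real^'k \<Rightarrow> real" where
  "vder X f z = (\<Sum>A\<in>UNIV. X z $ A * pd A f z)"

definition cov :: "('k::finite \<Rightarrow> 'k \<Rightarrow> 'k \<Rightarrow> real^'k \<Rightarrow> real)
     \<Rightarrow> (real^'k \<Rightarrow> real^'k) \<Rightarrow> (real^'k \<Rightarrow> real^'k) \<Rightarrow> real^'k \<Rightarrow> real^'k" where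
  "cov Gt X Y z = (\<chi> C. vder X (\<lambda>w. Y w $ C) z
     + (\<Sum>A\<in>UNIV. \<Sum>B\<in>UNIV. Gt C A B z * X z $ A * Y z $ B))"

definition lie :: "(real^'k::finite \<Rightarrow> real^'k) \<Rightarrow> (real^'k \<Rightarrow> real^'k) \<Rightarrow> real^'k \<Rightarrow> real^'k" where
  "lie X Y z = (\<chi> C. vder X (\<lambda>w. Y w $ C) z - vder Y (\<lambda>w. X w $ C) z)"

definition torsion :: "('k::finite \<Rightarrow> 'k \<Rightarrow> 'k \<Rightarrow> real^'k \<Rightarrow> real)
     \<Rightarrow> (real^'k \<Rightarrow> real^'k) \<Rightarrow> (real^'k \<Rightarrow> real^'k) \<Rightarrow> real^'k \<Rightarrow> real^'k" where
  "torsion Gt X Y z = cov Gt X Y z - cov Gt Y X z - lie X Y z"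

definition coordfield :: "'k::finite \<Rightarrow> real^'k \<Rightarrow> real^'k" where
  "coordfield A z = axis A 1"

definition metric_conn_on :: "(real^'k::finite) set \<Rightarrow> ('k \<Rightarrow> 'k \<Rightarrow> 'k \<Rightarrow> real^'k \<Rightarrow> real)
     \<Rightarrow> (real^'k \<Rightarrow> real^'k \<Rightarrow> real^'k \<Rightarrow> real) \<Rightarrow> bool" where
  "metric_conn_on S Gt g \<longleftrightarrow> (\<forall>z\<in>S. \<forall>A B C.
     pd A (\<lambda>w. g w (axis B 1) (axis C 1)) z
       = g z (cov Gt (coordfield A) (coordfield B) z) (axis C 1)
       + g z (axis B 1) (cov Gt (coordfield A) (coordfield C) z))"

end

theory Submission
  imports Defs
begin

text \<open>A metric connection is determined by its torsion through the Koszul formula.  On the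
  coordinate vectors of \<open>T*U\<close> it gives the lowered coefficients \<open>g(nabla_A d_B, d_D)\<close> in terms
  of the derivatives of \<open>g = gext Gam c\<close>, which are explicit in \<open>c\<close>, \<open>Gamma\<close> and \<open>p_a Gamma^a\<close>,
  and of the prescribed torsion.  Since \<open>g\<close> pairs the fibre direction \<open>d_(n+i)\<close> with the base
  direction \<open>d_j\<close> as \<open>delta_ij\<close> and fibre directions among themselves as \<open>0\<close>, it is nondegenerate,
  so every formula for \<open>nabla\<close> in the adapted frame can be checked by pairing both sides with all
  coordinate vectors.  In the only nontrivial case, \<open>nabla_(E_i) E_j\<close> paired with \<open>d_k\<close>, the terms
  linear in \<open>p\<close> (from differentiating \<open>p_a Gamma^a_hj\<close> along \<open>E_i\<close>) are cancelled exactly by the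
  curvature part \<open>p_s R_ijr^s\<close> of the torsion.\<close>

lemma sum_UNIV_sum_type:
  fixes F :: "('a::finite + 'b::finite) \<Rightarrow> 'c::comm_monoid_add"
  shows "(\<Sum>A\<in>UNIV. F A) = (\<Sum>i\<in>UNIV. F (Inl i)) + (\<Sum>i\<in>UNIV. F (Inr i))"
proof -
  have "(\<Sum>A\<in>UNIV. F A) = (\<Sum>A\<in>UNIV <+> UNIV. F A)" by simp
  also have "\<dots> = (\<Sum>i\<in>UNIV. F (Inl i)) + (\<Sum>i\<in>UNIV. F (Inr i))"
    by (subst sum.Plus) (auto simp: comp_def)
  finally show ?thesis .
qed

lemma sum_mult_delta [simp]:
  fixes f :: "'a::finite \<Rightarrow> 'b::semiring_1"
  shows "(\<Sum>i\<in>UNIV. f i * (if i = d then 1 else 0)) = f d"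
    "(\<Sum>i\<in>UNIV. (if i = d then 1 else 0) * f i) = f d"
    "(\<Sum>i\<in>UNIV. f i * (if d = i then 1 else 0)) = f d"
    "(\<Sum>i\<in>UNIV. (if d = i then 1 else 0) * f i) = f d"
  by (simp_all add: if_distrib[of "\<lambda>x. f _ * x"] if_distrib[of "\<lambda>x. x * f _"] cong: if_cong)

lemma axis_one_nth: "axis A (1::real) $ B = (if B = A then 1 else 0)"
  by (simp add: axis_def)

section \<open>Partial derivatives\<close>

lemma pd_const: "pd A (\<lambda>w. k) z = 0"
  by (simp add: pd_def)

lemma smooth_on_has_pd:
  assumes "smooth_on U f" "x \<in> U"
  shows "((\<lambda>t. f (x + t *\<^sub>R axis k 1)) has_real_derivative pd k f x) (at 0)"
proof -
  have "f differentiable (at x)"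
    using assms unfolding smooth_on_def by (metis iter_pd.simps(1))
  then have "(f \<circ> (\<lambda>t::real. x + t *\<^sub>R axis k 1)) differentiable (at 0)"
    by (intro differentiable_chain_at derivative_intros) simp
  then show ?thesis
    unfolding pd_def comp_def using DERIV_deriv_iff_real_differentiable by blast
qed

lemma pd_cong_open:
  assumes "open U" "x \<in> U" "smooth_on U f" "\<And>y. y \<in> U \<Longrightarrow> f y = g y"
  shows "pd k g x = pd k f x"
proof -
  have "((\<lambda>t::real. x + t *\<^sub>R axis k 1) \<longlongrightarrow> x + 0 *\<^sub>R axis k 1) (nhds 0)"
    by (intro tendsto_intros filterlim_ident)
  then have near: "eventually (\<lambda>t. x + t *\<^sub>R axis k 1 \<in> U) (nhds (0::real))"
    using assms(1,2) by (intro topological_tendstoD) simp_all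
  have "((\<lambda>t. g (x + t *\<^sub>R axis k 1)) has_real_derivative pd k f x) (at 0)"
    using smooth_on_has_pd[OF assms(3,2)]
    by (subst DERIV_cong_ev[OF refl _ refl, where g="\<lambda>t. f (x + t *\<^sub>R axis k 1)"])
      (auto intro: eventually_mono[OF near] simp: assms(4))
  then show ?thesis unfolding pd_def by (rule DERIV_imp_deriv)
qed

section \<open>Metric connections and the Koszul formula\<close>

definition christoffel1 :: "(real^'k \<Rightarrow> real^'k \<Rightarrow> real^'k \<Rightarrow> real)
    \<Rightarrow> ('k::finite \<Rightarrow> 'k \<Rightarrow> 'k \<Rightarrow> real^'k \<Rightarrow> real) \<Rightarrow> 'k \<Rightarrow> 'k \<Rightarrow> 'k \<Rightarrow> real^'k \<Rightarrow> real" where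
  "christoffel1 g Gt A B D z = g z (\<chi> C. Gt C A B z) (axis D 1)"

definition metric_pd :: "(real^'k::finite \<Rightarrow> real^'k \<Rightarrow> real^'k \<Rightarrow> real)
    \<Rightarrow> 'k \<Rightarrow> 'k \<Rightarrow> 'k \<Rightarrow> real^'k \<Rightarrow> real" where
  "metric_pd g A B D z = pd A (\<lambda>w. g w (axis B 1) (axis D 1)) z"

definition torsion_lowered :: "(real^'k \<Rightarrow> real^'k \<Rightarrow> real^'k \<Rightarrow> real)
    \<Rightarrow> ('k::finite \<Rightarrow> 'k \<Rightarrow> 'k \<Rightarrow> real^'k \<Rightarrow> real) \<Rightarrow> 'k \<Rightarrow> 'k \<Rightarrow> 'k \<Rightarrow> real^'k \<Rightarrow> real" where
  "torsion_lowered g Gt A B D z = g z (\<chi> C. Gt C A B z - Gt C B A z) (axis D 1)"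

lemma cov_coordfield: "cov Gt (coordfield A) (coordfield B) z = (\<chi> C. Gt C A B z)"
  by (simp add: cov_def vder_def coordfield_def axis_one_nth pd_const vec_eq_iff)

lemma torsion_nth: "torsion Gt X Y z $ C
   = (\<Sum>A\<in>UNIV. X z $ A * (\<Sum>B\<in>UNIV. Y z $ B * (Gt C A B z - Gt C B A z)))"
proof -
  have "(\<Sum>A\<in>UNIV. \<Sum>B\<in>UNIV. Gt C A B z * Y z $ A * X z $ B)
      = (\<Sum>A\<in>UNIV. \<Sum>B\<in>UNIV. Gt C B A z * X z $ A * Y z $ B)"
    by (subst sum.swap) (simp add: mult_ac)
  then show ?thesis
    by (simp add: torsion_def cov_def lie_def algebra_simps sum_subtractf sum_distrib_left)
qed

context
  fixes g :: "real^'k::finite \<Rightarrow> real^'k \<Rightarrow> real^'k \<Rightarrow> real" and z :: "real^'k"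
  assumes linear_left: "\<And>u D. g z u (axis D 1) = (\<Sum>C\<in>UNIV. u $ C * g z (axis C 1) (axis D 1))"
begin

lemma torsion_lowered_eq:
  "torsion_lowered g Gt A B D z = christoffel1 g Gt A B D z - christoffel1 g Gt B A D z"
  unfolding torsion_lowered_def christoffel1_def
  by (subst (1 2 3) linear_left) (simp add: sum_subtractf algebra_simps)

lemma cov_paired_axis:
  "g z (cov Gt X Y z) (axis D 1)
    = (\<Sum>C\<in>UNIV. vder X (\<lambda>w. Y w $ C) z * g z (axis C 1) (axis D 1))
    + (\<Sum>A\<in>UNIV. X z $ A * (\<Sum>B\<in>UNIV. Y z $ B * christoffel1 g Gt A B D z))"
proof -
  let ?g = "\<lambda>C. g z (axis C 1) (axis D 1)"
  have "(\<Sum>C\<in>UNIV. (\<Sum>A\<in>UNIV. \<Sum>B\<in>UNIV. Gt C A B z * X z $ A * Y z $ B) * ?g C)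
      = (\<Sum>C\<in>UNIV. \<Sum>A\<in>UNIV. \<Sum>B\<in>UNIV. Gt C A B z * X z $ A * Y z $ B * ?g C)"
    by (simp add: sum_distrib_right)
  also have "\<dots> = (\<Sum>A\<in>UNIV. \<Sum>B\<in>UNIV. \<Sum>C\<in>UNIV. Gt C A B z * X z $ A * Y z $ B * ?g C)"
    by (subst sum.swap) (intro sum.cong refl sum.swap)
  also have "\<dots> = (\<Sum>A\<in>UNIV. X z $ A * (\<Sum>B\<in>UNIV. Y z $ B * christoffel1 g Gt A B D z))"
    unfolding christoffel1_def by (subst linear_left) (simp add: sum_distrib_left mult_ac)
  finally have "(\<Sum>C\<in>UNIV. (\<Sum>A\<in>UNIV. \<Sum>B\<in>UNIV. Gt C A B z * X z $ A * Y z $ B) * ?g C)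
     = (\<Sum>A\<in>UNIV. X z $ A * (\<Sum>B\<in>UNIV. Y z $ B * christoffel1 g Gt A B D z))" .
  then show ?thesis
    by (subst linear_left) (simp add: cov_def ring_distribs sum.distrib)
qed

lemma koszul_formula:
  assumes "metric_conn_on S Gt g" "z \<in> S" "\<And>u v. g z u v = g z v u"
  shows "2 * christoffel1 g Gt A B D z
     = metric_pd g A B D z + metric_pd g B A D z - metric_pd g D A B z
     + torsion_lowered g Gt A B D z - torsion_lowered g Gt A D B z - torsion_lowered g Gt B D A z"
proof -
  have compatible: "metric_pd g A B D z = christoffel1 g Gt A B D z + christoffel1 g Gt A D B z"
    for A B D
    using assms unfolding metric_conn_on_def metric_pd_def christoffel1_def cov_coordfield
    by metis
  show ?thesis
    using compatible[of A B D] compatible[of B A D] compatible[of D A B]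
      torsion_lowered_eq[of Gt A B D] torsion_lowered_eq[of Gt A D B]
      torsion_lowered_eq[of Gt B D A]
    by linarith
qed

end

section \<open>The modified Riemannian extension in coordinates\<close>

definition pGam :: "('n::finite \<Rightarrow> 'n \<Rightarrow> 'n \<Rightarrow> real^'n \<Rightarrow> real) \<Rightarrow> real^('n + 'n) \<Rightarrow> 'n \<Rightarrow> 'n \<Rightarrow> real"
  where "pGam Gam z h j = (\<Sum>a\<in>UNIV. fib z $ a * Gam a h j (base z))"

lemma Efr_nth_Inl: "Efr Gam j z $ Inl k = (if k = j then 1 else 0)"
  by (simp add: Efr_def axis_one_nth)

lemma Efr_nth_Inr: "Efr Gam j z $ Inr h = pGam Gam z h j"
  by (simp add: Efr_def axis_one_nth pGam_def if_distrib cong: if_cong)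

lemma Ebar_nth: "Ebar j z $ A = (if A = Inr j then 1 else 0)"
  by (simp add: Ebar_def axis_one_nth)

lemma sum_mult_Ebar:
  "(\<Sum>A\<in>UNIV. F A * Ebar i z $ A) = (F (Inr i) :: real)"
  "(\<Sum>A\<in>UNIV. Ebar i z $ A * F A) = (F (Inr i) :: real)"
  by (simp_all add: sum_UNIV_sum_type Ebar_nth)

lemma sum_mult_Efr:
  "(\<Sum>A\<in>UNIV. F A * Efr Gam j z $ A) = F (Inl j) + (\<Sum>h\<in>UNIV. F (Inr h) * pGam Gam z h j)"
  "(\<Sum>A\<in>UNIV. Efr Gam j z $ A * F A) = F (Inl j) + (\<Sum>h\<in>UNIV. pGam Gam z h j * F (Inr h))"
  by (simp_all add: sum_UNIV_sum_type Efr_nth_Inl Efr_nth_Inr)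

lemma gext_expand: "gext Gam c z u v =
   (\<Sum>i\<in>UNIV. \<Sum>j\<in>UNIV. c i j (base z) * u $ Inl i * v $ Inl j)
 + (\<Sum>i\<in>UNIV. u $ Inl i * (v $ Inr i - (\<Sum>j\<in>UNIV. pGam Gam z i j * v $ Inl j))
     + (u $ Inr i - (\<Sum>j\<in>UNIV. pGam Gam z i j * u $ Inl j)) * v $ Inl i)"
  by (simp add: gext_def frame_coords_def Let_def pGam_def)

lemma gext_zero_left: "gext Gam c z 0 v = 0"
  by (simp add: gext_expand)

lemma gext_axis_Inr: "gext Gam c z u (axis (Inr d) 1) = u $ Inl d"
  by (simp add: gext_expand axis_one_nth)

lemma gext_axis_Inl: "gext Gam c z u (axis (Inl d) 1) =
   (\<Sum>i\<in>UNIV. c i d (base z) * u $ Inl i) + u $ Inr d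
   - (\<Sum>i\<in>UNIV. u $ Inl i * pGam Gam z i d) - (\<Sum>j\<in>UNIV. pGam Gam z d j * u $ Inl j)"
  by (simp add: gext_expand axis_one_nth ring_distribs sum.distrib sum_subtractf)

lemma gext_axis_axis:
  "gext Gam c z (axis (Inl i) 1) (axis (Inl j) 1) = c i j (base z) - pGam Gam z i j - pGam Gam z j i"
  "gext Gam c z (axis (Inr i) 1) (axis (Inl j) 1) = (if i = j then 1 else 0)"
  "gext Gam c z (axis (Inl i) 1) (axis (Inr j) 1) = (if i = j then 1 else 0)"
  "gext Gam c z (axis (Inr i) 1) (axis (Inr j) 1) = 0"
  by (simp_all add: gext_axis_Inl gext_axis_Inr axis_one_nth)

lemma gext_linear_left:
  "gext Gam c z u (axis D 1) = (\<Sum>C\<in>UNIV. u $ C * gext Gam c z (axis C 1) (axis D 1))"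
  unfolding sum_UNIV_sum_type[of "\<lambda>C. u $ C * _ C"]
  by (cases D) (simp_all add: gext_axis_Inl gext_axis_Inr axis_one_nth ring_distribs
      sum_subtractf sum.distrib sum_distrib_left mult_ac)

lemma gext_cov_paired_axis:
  "gext Gam c z (cov Gt X Y z) (axis D 1)
    = (\<Sum>C\<in>UNIV. vder X (\<lambda>w. Y w $ C) z * gext Gam c z (axis C 1) (axis D 1))
    + (\<Sum>A\<in>UNIV. X z $ A * (\<Sum>B\<in>UNIV. Y z $ B * christoffel1 (gext Gam c) Gt A B D z))"
  by (rule cov_paired_axis[of "gext Gam c" z]) (rule gext_linear_left)

lemma gext_sym:
  assumes "\<And>i j. c i j (base z) = c j i (base z)"
  shows "gext Gam c z u v = gext Gam c z v u"
proof -
  have "(\<Sum>i\<in>UNIV. \<Sum>j\<in>UNIV. c i j (base z) * u $ Inl i * v $ Inl j)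
      = (\<Sum>i\<in>UNIV. \<Sum>j\<in>UNIV. c i j (base z) * v $ Inl i * u $ Inl j)"
    by (subst sum.swap) (simp add: assms mult_ac)
  then show ?thesis unfolding gext_expand by (simp add: algebra_simps)
qed

lemma gext_axis_eqI:
  assumes "\<And>D. gext Gam c z u (axis D 1) = gext Gam c z v (axis D 1)"
  shows "u = v"
proof -
  have base_part: "u $ Inl d = v $ Inl d" for d
    using assms[of "Inr d"] by (simp add: gext_axis_Inr)
  have "u $ Inr d = v $ Inr d" for d
    using assms[of "Inl d"] by (simp add: gext_axis_Inl base_part)
  with base_part show ?thesis by (simp add: vec_eq_iff) (metis sum.exhaust)
qed

lemma base_add_axis:
  "base (z + t *\<^sub>R axis (Inl k) 1) = base z + t *\<^sub>R axis k 1"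
  "base (z + t *\<^sub>R axis (Inr k) 1) = base z"
  by (simp_all add: base_def vec_eq_iff axis_one_nth)

lemma fib_add_axis:
  "fib (z + t *\<^sub>R axis (Inl k) 1) = fib z"
  "fib (z + t *\<^sub>R axis (Inr k) 1) = fib z + t *\<^sub>R axis k 1"
  by (simp_all add: fib_def vec_eq_iff axis_one_nth)

lemma pGam_has_derivative_Inl:
  assumes "\<And>a. smooth_on U (Gam a h j)" "base z \<in> U"
  shows "((\<lambda>t. pGam Gam (z + t *\<^sub>R axis (Inl k) 1) h j) has_real_derivative
           (\<Sum>a\<in>UNIV. fib z $ a * pd k (Gam a h j) (base z))) (at 0)"
  unfolding pGam_def base_add_axis fib_add_axis
  by (intro DERIV_sum DERIV_cmult smooth_on_has_pd[where U=U] assms)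

lemma pGam_has_derivative_Inr:
  "((\<lambda>t. pGam Gam (z + t *\<^sub>R axis (Inr k) 1) h j) has_real_derivative Gam k h j (base z)) (at 0)"
proof -
  have "((\<lambda>t. pGam Gam (z + t *\<^sub>R axis (Inr k) 1) h j) has_real_derivative
           (\<Sum>a\<in>UNIV. (if a = k then 1 else 0) * Gam a h j (base z))) (at 0)"
    unfolding pGam_def base_add_axis fib_add_axis
    by (intro DERIV_sum) (auto intro!: derivative_eq_intros simp: axis_one_nth)
  then show ?thesis by simp
qed

lemma pd_Inr_pGam: "pd (Inr k) (\<lambda>w. pGam Gam w h j) z = Gam k h j (base z)"
  unfolding pd_def by (intro DERIV_imp_deriv pGam_has_derivative_Inr)

lemma vder_Ebar_nth: "vder X (\<lambda>w. Ebar j w $ C) z = 0"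
  by (simp add: vder_def Ebar_nth pd_const)

lemma vder_Efr_nth_Inl: "vder X (\<lambda>w. Efr Gam j w $ Inl k) z = 0"
  by (simp add: vder_def Efr_nth_Inl pd_const)

lemma vder_Ebar_Efr_nth_Inr: "vder (Ebar i) (\<lambda>w. Efr Gam j w $ Inr h) z = Gam i h j (base z)"
  by (simp add: vder_def Efr_nth_Inr sum_mult_Ebar pd_Inr_pGam)

definition p_pd_Gam :: "('n::finite \<Rightarrow> 'n \<Rightarrow> 'n \<Rightarrow> real^'n \<Rightarrow> real) \<Rightarrow> real^('n + 'n)
    \<Rightarrow> 'n \<Rightarrow> 'n \<Rightarrow> 'n \<Rightarrow> real" where
  "p_pd_Gam Gam z u v w = (\<Sum>s\<in>UNIV. fib z $ s * pd u (Gam s v w) (base z))"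

definition p_Gam_Gam :: "('n::finite \<Rightarrow> 'n \<Rightarrow> 'n \<Rightarrow> real^'n \<Rightarrow> real) \<Rightarrow> real^('n + 'n)
    \<Rightarrow> 'n \<Rightarrow> 'n \<Rightarrow> 'n \<Rightarrow> real" where
  "p_Gam_Gam Gam z u v w
     = (\<Sum>s\<in>UNIV. \<Sum>a\<in>UNIV. fib z $ s * Gam s u a (base z) * Gam a v w (base z))"

definition Gam_c :: "('n::finite \<Rightarrow> 'n \<Rightarrow> 'n \<Rightarrow> real^'n \<Rightarrow> real) \<Rightarrow> ('n \<Rightarrow> 'n \<Rightarrow> real^'n \<Rightarrow> real)
    \<Rightarrow> real^('n + 'n) \<Rightarrow> 'n \<Rightarrow> 'n \<Rightarrow> 'n \<Rightarrow> real" where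
  "Gam_c Gam c z u v w = (\<Sum>a\<in>UNIV. Gam a u v (base z) * c a w (base z))"

lemma p_curv_eq: "(\<Sum>s\<in>UNIV. fib z $ s * curv Gam i j k s (base z))
   = p_pd_Gam Gam z i j k - p_pd_Gam Gam z j i k + p_Gam_Gam Gam z i j k - p_Gam_Gam Gam z j i k"
  by (simp add: curv_def p_pd_Gam_def p_Gam_Gam_def ring_distribs sum.distrib sum_subtractf
      sum_distrib_left mult_ac)

definition cov_Efr_Efr_formula :: "('n::finite \<Rightarrow> 'n \<Rightarrow> 'n \<Rightarrow> real^'n \<Rightarrow> real)
    \<Rightarrow> ('n \<Rightarrow> 'n \<Rightarrow> real^'n \<Rightarrow> real) \<Rightarrow> 'n \<Rightarrow> 'n \<Rightarrow> real^('n + 'n) \<Rightarrow> real^('n + 'n)" where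
  "cov_Efr_Efr_formula Gam c i j z
     = (\<Sum>h\<in>UNIV. Gam h i j (base z) *\<^sub>R Efr Gam h z)
     + (\<Sum>h\<in>UNIV. ((covc Gam c i j h (base z) + covc Gam c j i h (base z)
                     - covc Gam c h i j (base z)) / 2) *\<^sub>R Ebar h z)"

lemma gext_cov_Efr_Efr_formula_Inl:
  "gext Gam c z (cov_Efr_Efr_formula Gam c i j z) (axis (Inl k) 1)
     = Gam_c Gam c z i j k + (covc Gam c i j k (base z) + covc Gam c j i k (base z)
                        - covc Gam c k i j (base z)) / 2
       - (\<Sum>h\<in>UNIV. Gam h i j (base z) * pGam Gam z h k)"
  by (simp add: cov_Efr_Efr_formula_def gext_axis_Inl Efr_nth_Inl Efr_nth_Inr Ebar_nth Gam_c_def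
      mult_ac sum_divide_distrib[symmetric])

section \<open>The metric connection with the prescribed torsion\<close>

context
  fixes U :: "(real^'n::finite) set"
    and Gam :: "'n \<Rightarrow> 'n \<Rightarrow> 'n \<Rightarrow> real^'n \<Rightarrow> real"
    and c :: "'n \<Rightarrow> 'n \<Rightarrow> real^'n \<Rightarrow> real"
    and Gt :: "('n + 'n) \<Rightarrow> ('n + 'n) \<Rightarrow> ('n + 'n) \<Rightarrow> real^('n + 'n) \<Rightarrow> real"
  assumes U_open: "open U"
    and Gam_smooth: "\<And>h i j. smooth_on U (Gam h i j)"
    and torsion_free: "\<And>h i j x. x \<in> U \<Longrightarrow> Gam h i j x = Gam h j i x"
    and c_smooth: "\<And>i j. smooth_on U (c i j)"
    and c_sym: "\<And>i j x. x \<in> U \<Longrightarrow> c i j x = c j i x"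
    and metric: "metric_conn_on (cotangent_region U) Gt (gext Gam c)"
    and tor_EE: "\<And>i j z. z \<in> cotangent_region U \<Longrightarrow>
        torsion Gt (Efr Gam i) (Efr Gam j) z
          = (\<Sum>r\<in>UNIV. (- (\<Sum>s\<in>UNIV. fib z $ s * curv Gam i j r s (base z))) *\<^sub>R Ebar r z)"
    and tor_EbE: "\<And>i j z. z \<in> cotangent_region U \<Longrightarrow> torsion Gt (Ebar i) (Efr Gam j) z = 0"
    and tor_EbEb: "\<And>i j z. z \<in> cotangent_region U \<Longrightarrow> torsion Gt (Ebar i) (Ebar j) z = 0"
begin

lemma base_in_U: "z \<in> cotangent_region U \<Longrightarrow> base z \<in> U"
  by (simp add: cotangent_region_def)

lemma koszul: assumes "z \<in> cotangent_region U"
  shows "2 * christoffel1 (gext Gam c) Gt A B D z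
     = metric_pd (gext Gam c) A B D z + metric_pd (gext Gam c) B A D z - metric_pd (gext Gam c) D A B z
     + torsion_lowered (gext Gam c) Gt A B D z - torsion_lowered (gext Gam c) Gt A D B z - torsion_lowered (gext Gam c) Gt B D A z"
  using c_sym[OF base_in_U[OF assms]]
  by (intro koszul_formula[OF gext_linear_left metric assms] gext_sym) blast

lemma metric_pd_Inl_Inl_Inl: assumes "z \<in> cotangent_region U"
  shows "metric_pd (gext Gam c) (Inl k) (Inl i) (Inl j) z
     = pd k (c i j) (base z) - p_pd_Gam Gam z k i j - p_pd_Gam Gam z k j i"
proof -
  have "((\<lambda>t. c i j (base (z + t *\<^sub>R axis (Inl k) 1)) - pGam Gam (z + t *\<^sub>R axis (Inl k) 1) i j
       - pGam Gam (z + t *\<^sub>R axis (Inl k) 1) j i)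
     has_real_derivative pd k (c i j) (base z) - p_pd_Gam Gam z k i j - p_pd_Gam Gam z k j i) (at 0)"
    unfolding p_pd_Gam_def
    by (intro DERIV_diff pGam_has_derivative_Inl[where U=U] Gam_smooth base_in_U assms)
      (simp add: base_add_axis smooth_on_has_pd[OF c_smooth base_in_U[OF assms]])
  then show ?thesis
    unfolding metric_pd_def gext_axis_axis pd_def by (rule DERIV_imp_deriv)
qed

lemma metric_pd_Inr_Inl_Inl:
  "metric_pd (gext Gam c) (Inr k) (Inl i) (Inl j) z = - Gam k i j (base z) - Gam k j i (base z)"
proof -
  have "((\<lambda>t. c i j (base (z + t *\<^sub>R axis (Inr k) 1)) - pGam Gam (z + t *\<^sub>R axis (Inr k) 1) i j
     - pGam Gam (z + t *\<^sub>R axis (Inr k) 1) j i)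
     has_real_derivative 0 - Gam k i j (base z) - Gam k j i (base z)) (at 0)"
    by (intro DERIV_diff pGam_has_derivative_Inr) (simp add: base_add_axis)
  then show ?thesis unfolding metric_pd_def gext_axis_axis pd_def by (simp add: DERIV_imp_deriv)
qed

lemma metric_pd_Inr_arg:
  "metric_pd (gext Gam c) A (Inr i) D z = 0" "metric_pd (gext Gam c) A B (Inr j) z = 0"
  by (cases D; cases B; simp add: metric_pd_def gext_axis_axis pd_const)+

lemma Gt_sym_Inr_Inr: assumes "z \<in> cotangent_region U"
  shows "Gt C (Inr i) (Inr j) z = Gt C (Inr j) (Inr i) z"
proof -
  have "torsion Gt (Ebar i) (Ebar j) z $ C = 0" using tor_EbEb[OF assms] by simp
  then show ?thesis unfolding torsion_nth by (simp add: sum_mult_Ebar)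
qed

lemma Gt_sym_Inr_Inl: assumes "z \<in> cotangent_region U"
  shows "Gt C (Inr i) (Inl j) z = Gt C (Inl j) (Inr i) z"
proof -
  have "torsion Gt (Ebar i) (Efr Gam j) z $ C = 0" using tor_EbE[OF assms] by simp
  then show ?thesis
    unfolding torsion_nth by (simp add: sum_mult_Ebar sum_mult_Efr Gt_sym_Inr_Inr[OF assms])
qed

lemma Gt_skew_Inl_Inl: assumes "z \<in> cotangent_region U"
  shows "Gt C (Inl i) (Inl j) z - Gt C (Inl j) (Inl i) z
     = (case C of Inl _ \<Rightarrow> 0 | Inr r \<Rightarrow> - (\<Sum>s\<in>UNIV. fib z $ s * curv Gam i j r s (base z)))"
proof -
  have "torsion Gt (Efr Gam i) (Efr Gam j) z $ C =
     (\<Sum>r\<in>UNIV. (- (\<Sum>s\<in>UNIV. fib z $ s * curv Gam i j r s (base z))) *\<^sub>R Ebar r z) $ C"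
    using tor_EE[OF assms] by simp
  then show ?thesis unfolding torsion_nth
    by (cases C) (simp_all add: sum_mult_Ebar sum_mult_Efr Gt_sym_Inr_Inr[OF assms]
        Gt_sym_Inr_Inl[OF assms] Ebar_nth sum_negf)
qed

lemma torsion_lowered_Inr: assumes "z \<in> cotangent_region U"
  shows "torsion_lowered (gext Gam c) Gt (Inr i) B D z = 0"
proof -
  have "(\<chi> C. Gt C (Inr i) B z - Gt C B (Inr i) z) = 0"
    by (cases B) (simp_all add: vec_eq_iff Gt_sym_Inr_Inr[OF assms] Gt_sym_Inr_Inl[OF assms])
  then show ?thesis unfolding torsion_lowered_def by (simp add: gext_zero_left)
qed

lemma torsion_lowered_Inl_Inr: assumes "z \<in> cotangent_region U"
  shows "torsion_lowered (gext Gam c) Gt (Inl i) (Inr j) D z = 0"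
proof -
  have "(\<chi> C. Gt C (Inl i) (Inr j) z - Gt C (Inr j) (Inl i) z) = 0"
    by (simp add: vec_eq_iff Gt_sym_Inr_Inl[OF assms])
  then show ?thesis unfolding torsion_lowered_def by (simp add: gext_zero_left)
qed

lemma torsion_lowered_Inl_Inl_Inr: assumes "z \<in> cotangent_region U"
  shows "torsion_lowered (gext Gam c) Gt (Inl i) (Inl j) (Inr d) z = 0"
  unfolding torsion_lowered_def gext_axis_Inr using Gt_skew_Inl_Inl[OF assms, of "Inl d"] by simp

lemma torsion_lowered_Inl_Inl_Inl: assumes "z \<in> cotangent_region U"
  shows "torsion_lowered (gext Gam c) Gt (Inl i) (Inl j) (Inl d) z
    = - (\<Sum>s\<in>UNIV. fib z $ s * curv Gam i j d s (base z))"
  unfolding torsion_lowered_def gext_axis_Inl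
  using Gt_skew_Inl_Inl[OF assms, of "Inl _"] Gt_skew_Inl_Inl[OF assms, of "Inr d"] by simp

lemmas torsion_lowered_simps =
  torsion_lowered_Inr torsion_lowered_Inl_Inr torsion_lowered_Inl_Inl_Inr

lemma christoffel1_Inr_Inr: assumes "z \<in> cotangent_region U"
  shows "christoffel1 (gext Gam c) Gt (Inr i) (Inr j) D z = 0"
  using koszul[OF assms, of "Inr i" "Inr j" D]
  by (cases D) (simp_all add: torsion_lowered_simps[OF assms] metric_pd_Inr_arg)

lemma christoffel1_Inr_Inl_Inl: assumes "z \<in> cotangent_region U"
  shows "christoffel1 (gext Gam c) Gt (Inr i) (Inl j) (Inl k) z = - Gam i j k (base z)"
  using koszul[OF assms, of "Inr i" "Inl j" "Inl k"] torsion_free[OF base_in_U[OF assms], of i j k]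
  by (simp add: torsion_lowered_simps[OF assms] metric_pd_Inr_Inl_Inl metric_pd_Inr_arg)

lemma christoffel1_Inr_Inl_Inr: assumes "z \<in> cotangent_region U"
  shows "christoffel1 (gext Gam c) Gt (Inr i) (Inl j) (Inr k) z = 0"
  using koszul[OF assms, of "Inr i" "Inl j" "Inr k"]
  by (simp add: torsion_lowered_simps[OF assms] metric_pd_Inr_arg)

lemma christoffel1_Inl_Inr_Inl: assumes "z \<in> cotangent_region U"
  shows "christoffel1 (gext Gam c) Gt (Inl i) (Inr j) (Inl k) z = - Gam j i k (base z)"
  using koszul[OF assms, of "Inl i" "Inr j" "Inl k"] torsion_free[OF base_in_U[OF assms], of j i k]
  by (simp add: torsion_lowered_simps[OF assms] metric_pd_Inr_Inl_Inl metric_pd_Inr_arg)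

lemma christoffel1_Inl_Inr_Inr: assumes "z \<in> cotangent_region U"
  shows "christoffel1 (gext Gam c) Gt (Inl i) (Inr j) (Inr k) z = 0"
  using koszul[OF assms, of "Inl i" "Inr j" "Inr k"]
  by (simp add: torsion_lowered_simps[OF assms] metric_pd_Inr_arg)

lemma christoffel1_Inl_Inl_Inr: assumes "z \<in> cotangent_region U"
  shows "christoffel1 (gext Gam c) Gt (Inl i) (Inl j) (Inr k) z = Gam k i j (base z)"
  using koszul[OF assms, of "Inl i" "Inl j" "Inr k"] torsion_free[OF base_in_U[OF assms], of k i j]
  by (simp add: torsion_lowered_simps[OF assms] metric_pd_Inr_Inl_Inl metric_pd_Inr_arg)

lemma christoffel1_Inl_Inl_Inl: assumes "z \<in> cotangent_region U"
  shows "2 * christoffel1 (gext Gam c) Gt (Inl i) (Inl j) (Inl k) z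
     = metric_pd (gext Gam c) (Inl i) (Inl j) (Inl k) z + metric_pd (gext Gam c) (Inl j) (Inl i) (Inl k) z
     - metric_pd (gext Gam c) (Inl k) (Inl i) (Inl j) z
     - (\<Sum>s\<in>UNIV. fib z $ s * curv Gam i j k s (base z))
     + (\<Sum>s\<in>UNIV. fib z $ s * curv Gam i k j s (base z))
     + (\<Sum>s\<in>UNIV. fib z $ s * curv Gam j k i s (base z))"
  using koszul[OF assms, of "Inl i" "Inl j" "Inl k"]
  by (simp add: torsion_lowered_Inl_Inl_Inl[OF assms])

lemma vder_Efr_Efr_nth_Inr: assumes "z \<in> cotangent_region U"
  shows "vder (Efr Gam i) (\<lambda>w. Efr Gam j w $ Inr h) z
    = p_pd_Gam Gam z i h j + (\<Sum>m\<in>UNIV. pGam Gam z m i * Gam m h j (base z))"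
proof -
  have "pd (Inl i) (\<lambda>w. pGam Gam w h j) z = p_pd_Gam Gam z i h j"
    unfolding pd_def[of "Inl i"] p_pd_Gam_def
    by (intro DERIV_imp_deriv pGam_has_derivative_Inl[where U=U] Gam_smooth base_in_U assms)
  then show ?thesis by (simp add: vder_def Efr_nth_Inr sum_mult_Efr pd_Inr_pGam)
qed

lemma sum_pGam_Gam: assumes "z \<in> cotangent_region U"
  shows "(\<Sum>m\<in>UNIV. pGam Gam z m u * Gam m v w (base z)) = p_Gam_Gam Gam z u v w"
    and "(\<Sum>m\<in>UNIV. Gam m v w (base z) * pGam Gam z m u) = p_Gam_Gam Gam z u v w"
proof -
  have "(\<Sum>m\<in>UNIV. pGam Gam z m u * Gam m v w (base z))
      = (\<Sum>s\<in>UNIV. \<Sum>m\<in>UNIV. fib z $ s * Gam s m u (base z) * Gam m v w (base z))"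
    by (subst sum.swap) (simp add: pGam_def sum_distrib_right)
  also have "\<dots> = p_Gam_Gam Gam z u v w" unfolding p_Gam_Gam_def
    by (intro sum.cong refl) (simp add: torsion_free[OF base_in_U[OF assms], of _ _ u])
  finally show "(\<Sum>m\<in>UNIV. pGam Gam z m u * Gam m v w (base z)) = p_Gam_Gam Gam z u v w" .
  then show "(\<Sum>m\<in>UNIV. Gam m v w (base z) * pGam Gam z m u) = p_Gam_Gam Gam z u v w"
    by (simp add: mult.commute)
qed

lemma p_pd_Gam_sym: assumes "z \<in> cotangent_region U"
  shows "p_pd_Gam Gam z u v w = p_pd_Gam Gam z u w v"
  unfolding p_pd_Gam_def
  using pd_cong_open[OF U_open base_in_U[OF assms] Gam_smooth torsion_free] by simp

lemma p_Gam_Gam_sym: assumes "z \<in> cotangent_region U"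
  shows "p_Gam_Gam Gam z u v w = p_Gam_Gam Gam z u w v"
  unfolding p_Gam_Gam_def using torsion_free[OF base_in_U[OF assms]] by simp

lemma Gam_c_sym: assumes "z \<in> cotangent_region U"
  shows "Gam_c Gam c z u v w = Gam_c Gam c z v u w"
  unfolding Gam_c_def using torsion_free[OF base_in_U[OF assms]] by simp

lemma covc_eq: assumes "z \<in> cotangent_region U"
  shows "covc Gam c i j k (base z) = pd i (c j k) (base z) - Gam_c Gam c z i j k - Gam_c Gam c z i k j"
  by (simp add: covc_def Gam_c_def sum.distrib c_sym[OF base_in_U[OF assms], of j])

lemma cov_Ebar_Ebar: assumes "z \<in> cotangent_region U"
  shows "cov Gt (Ebar i) (Ebar j) z = 0"
proof (rule gext_axis_eqI)
  fix D show "gext Gam c z (cov Gt (Ebar i) (Ebar j) z) (axis D 1) = gext Gam c z 0 (axis D 1)"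
    unfolding gext_cov_paired_axis
    by (simp add: vder_Ebar_nth sum_mult_Ebar christoffel1_Inr_Inr[OF assms] gext_zero_left)
qed

lemma cov_Ebar_Efr: assumes "z \<in> cotangent_region U"
  shows "cov Gt (Ebar i) (Efr Gam j) z = 0"
proof (rule gext_axis_eqI)
  fix D show "gext Gam c z (cov Gt (Ebar i) (Efr Gam j) z) (axis D 1) = gext Gam c z 0 (axis D 1)"
    unfolding gext_cov_paired_axis sum_mult_Ebar sum_mult_Efr
    using torsion_free[OF base_in_U[OF assms], of i]
    by (cases D) (simp_all add: sum_UNIV_sum_type vder_Efr_nth_Inl vder_Ebar_Efr_nth_Inr
        christoffel1_Inr_Inr[OF assms] christoffel1_Inr_Inl_Inl[OF assms]
        christoffel1_Inr_Inl_Inr[OF assms] gext_zero_left gext_axis_axis)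
qed

lemma cov_Efr_Ebar: assumes "z \<in> cotangent_region U"
  shows "cov Gt (Efr Gam i) (Ebar j) z = (\<Sum>h\<in>UNIV. (- Gam j i h (base z)) *\<^sub>R Ebar h z)"
proof (rule gext_axis_eqI)
  fix D show "gext Gam c z (cov Gt (Efr Gam i) (Ebar j) z) (axis D 1)
     = gext Gam c z (\<Sum>h\<in>UNIV. (- Gam j i h (base z)) *\<^sub>R Ebar h z) (axis D 1)"
    unfolding gext_cov_paired_axis sum_mult_Ebar sum_mult_Efr vder_Ebar_nth
    by (cases D) (simp_all add: christoffel1_Inr_Inr[OF assms] christoffel1_Inl_Inr_Inl[OF assms]
        christoffel1_Inl_Inr_Inr[OF assms] gext_axis_Inl gext_axis_Inr Ebar_nth sum_negf)
qed

lemma gext_cov_Efr_Efr_Inr: assumes "z \<in> cotangent_region U"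
  shows "gext Gam c z (cov Gt (Efr Gam i) (Efr Gam j) z) (axis (Inr k) 1)
     = gext Gam c z (cov_Efr_Efr_formula Gam c i j z) (axis (Inr k) 1)"
  unfolding gext_cov_paired_axis sum_mult_Efr sum_UNIV_sum_type
    vder_Efr_nth_Inl vder_Efr_Efr_nth_Inr[OF assms]
  by (simp add: cov_Efr_Efr_formula_def sum_UNIV_sum_type vder_Efr_nth_Inl gext_axis_axis
      christoffel1_Inl_Inl_Inr[OF assms] christoffel1_Inl_Inr_Inr[OF assms]
      christoffel1_Inr_Inl_Inr[OF assms] christoffel1_Inr_Inr[OF assms]
      gext_axis_Inr Efr_nth_Inl Ebar_nth axis_one_nth)

lemma gext_cov_Efr_Efr_Inl: assumes "z \<in> cotangent_region U"
  shows "gext Gam c z (cov Gt (Efr Gam i) (Efr Gam j) z) (axis (Inl k) 1)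
     = gext Gam c z (cov_Efr_Efr_formula Gam c i j z) (axis (Inl k) 1)"
proof -
  have lhs: "gext Gam c z (cov Gt (Efr Gam i) (Efr Gam j) z) (axis (Inl k) 1)
     = p_pd_Gam Gam z i k j + p_Gam_Gam Gam z i k j + christoffel1 (gext Gam c) Gt (Inl i) (Inl j) (Inl k) z
       - p_Gam_Gam Gam z j i k - p_Gam_Gam Gam z i j k"
    unfolding gext_cov_paired_axis sum_mult_Efr sum_UNIV_sum_type
      vder_Efr_nth_Inl vder_Efr_Efr_nth_Inr[OF assms]
    by (simp add: sum_UNIV_sum_type vder_Efr_nth_Inl gext_axis_axis
        christoffel1_Inl_Inr_Inl[OF assms] christoffel1_Inr_Inl_Inl[OF assms]
        christoffel1_Inl_Inr_Inr[OF assms] christoffel1_Inr_Inr[OF assms]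
        sum_negf sum_pGam_Gam[OF assms])
  show ?thesis
    unfolding lhs gext_cov_Efr_Efr_formula_Inl sum_pGam_Gam(2)[OF assms]
    using christoffel1_Inl_Inl_Inl[OF assms, of i j k]
    unfolding metric_pd_Inl_Inl_Inl[OF assms] p_curv_eq covc_eq[OF assms]
    using p_pd_Gam_sym[OF assms, of i k j] p_pd_Gam_sym[OF assms, of j k i]
      p_pd_Gam_sym[OF assms, of k j i] p_Gam_Gam_sym[OF assms, of i k j]
      p_Gam_Gam_sym[OF assms, of j k i] p_Gam_Gam_sym[OF assms, of k j i]
      Gam_c_sym[OF assms, of j i k] Gam_c_sym[OF assms, of k i j] Gam_c_sym[OF assms, of k j i]
    by (simp add: field_simps)
qed

lemma cov_Efr_Efr: assumes "z \<in> cotangent_region U"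
  shows "cov Gt (Efr Gam i) (Efr Gam j) z = cov_Efr_Efr_formula Gam c i j z"
proof (rule gext_axis_eqI)
  fix D show "gext Gam c z (cov Gt (Efr Gam i) (Efr Gam j) z) (axis D 1)
      = gext Gam c z (cov_Efr_Efr_formula Gam c i j z) (axis D 1)"
    by (cases D) (simp_all only: gext_cov_Efr_Efr_Inl[OF assms] gext_cov_Efr_Efr_Inr[OF assms])
qed

end

theorem proposition2:
  fixes U :: "(real^'n::finite) set"
    and Gam :: "'n \<Rightarrow> 'n \<Rightarrow> 'n \<Rightarrow> real^'n \<Rightarrow> real"
    and c :: "'n \<Rightarrow> 'n \<Rightarrow> real^'n \<Rightarrow> real"
    and Gt :: "('n + 'n) \<Rightarrow> ('n + 'n) \<Rightarrow> ('n + 'n) \<Rightarrow> real^('n + 'n) \<Rightarrow> real"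
  assumes U_open: "open U"
    and Gam_smooth: "\<And>h i j. smooth_on U (Gam h i j)"
    and torsion_free: "\<And>h i j x. x \<in> U \<Longrightarrow> Gam h i j x = Gam h j i x"
    and c_smooth: "\<And>i j. smooth_on U (c i j)"
    and c_sym: "\<And>i j x. x \<in> U \<Longrightarrow> c i j x = c j i x"
    and Gt_smooth: "\<And>A B C. smooth_on (cotangent_region U) (Gt A B C)"
    and metric: "metric_conn_on (cotangent_region U) Gt (gext Gam c)"
    and tor_EE: "\<And>i j z. z \<in> cotangent_region U \<Longrightarrow>
        torsion Gt (Efr Gam i) (Efr Gam j) z
          = (\<Sum>r\<in>UNIV. (- (\<Sum>s\<in>UNIV. fib z $ s * curv Gam i j r s (base z))) *\<^sub>R Ebar r z)"
    and tor_EEb: "\<And>i j z. z \<in> cotangent_region U \<Longrightarrow> torsion Gt (Efr Gam i) (Ebar j) z = 0"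
    and tor_EbE: "\<And>i j z. z \<in> cotangent_region U \<Longrightarrow> torsion Gt (Ebar i) (Efr Gam j) z = 0"
    and tor_EbEb: "\<And>i j z. z \<in> cotangent_region U \<Longrightarrow> torsion Gt (Ebar i) (Ebar j) z = 0"
  shows "\<forall>z\<in>cotangent_region U. \<forall>i j.
      cov Gt (Ebar i) (Ebar j) z = 0
    \<and> cov Gt (Ebar i) (Efr Gam j) z = 0
    \<and> cov Gt (Efr Gam i) (Ebar j) z = (\<Sum>h\<in>UNIV. (- Gam j i h (base z)) *\<^sub>R Ebar h z)
    \<and> cov Gt (Efr Gam i) (Efr Gam j) z
        = (\<Sum>h\<in>UNIV. Gam h i j (base z) *\<^sub>R Efr Gam h z)
        + (\<Sum>h\<in>UNIV. ((covc Gam c i j h (base z) + covc Gam c j i h (base z)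
                        - covc Gam c h i j (base z)) / 2) *\<^sub>R Ebar h z)"
proof -
  note setting = U_open Gam_smooth torsion_free c_smooth c_sym metric tor_EE tor_EbE tor_EbEb
  show ?thesis
    using cov_Ebar_Ebar[OF setting] cov_Ebar_Efr[OF setting] cov_Efr_Ebar[OF setting]
      cov_Efr_Efr[OF setting]
    unfolding cov_Efr_Efr_formula_def by blast
qed

end
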